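(* Let $G$ be a topological group carrying the final locally quasi-convex group topology with respect to a family of group homomorphisms $(u_i:G_i\to G)_{i\in I}$, where every $G_i$ is a $g$-barrelled topological group. Then $G$ is $g$-barrelled.
   Context: All groups are abelian. $\mathbb T=\mathbb R/\mathbb Z$, $\mathbb T_+=\rho([-1/4,1/4])$ where $\rho:\mathbb R\to\mathbb T$ is the quotient map. For a topological group $G$, $\Gamma G$ is the group of continuous homomorphisms $G\to\mathbb T$, and $\Gamma_s G$ is $\Gamma G$ with the topology of pointwise convergence. A set $M\subseteq\Gamma G$ is equicontinuous if for every zero neighbourhood $U$ of $\mathbb T$ there is a zero neighbourhood $V$ of $G$ with $\varphi(V)\subseteq U$ for all $\varphi\in M$. $G$ is $g$-barrelled if every compact subset of $\Gamma_s G$ is equicontinuous. A subset $A$ of a topological group $G$ is quasi-convex if for every $x\notin A$ there is a continuous character $\varphi$ with $\varphi(A)\subseteq\mathbb T_+$ and $\varphi(x)\notin\mathbb T_+$. A topological group is locally quasi-convex if it has a zero neighbourhood base of quasi-convex sets. The final locally quasi-convex group topology with respect to $(u_i)$ is the finest locally quasi-convex group topology on $G$ making all $u_i$ continuous. *)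

theory Defs
  imports "HOL-Analysis.Analysis" "HOL-Algebra.Group"
begin

text \<open>We model T = R/Z via the isomorphism R/Z -> S^1, t |-> exp(2 pi i t);
  the quotient map rho : R -> T becomes t |-> exp(2 pi i t).\<close>

definition Tgrp :: "complex monoid" where
  "Tgrp = \<lparr>carrier = sphere 0 1, mult = (*), one = 1\<rparr>"

definition Ttop :: "complex topology" where
  "Ttop = subtopology euclidean (sphere 0 1)"

definition rho :: "real \<Rightarrow> complex" where
  "rho t = exp (2 * pi * \<i> * complex_of_real t)"

definition Tplus :: "complex set" where
  "Tplus = rho ` {-1/4..1/4}"

definition topological_group :: "('a, 'm) monoid_scheme \<Rightarrow> 'a topology \<Rightarrow> bool" where
  "topological_group G X \<longleftrightarrow>
     comm_group G \<and> topspace X = carrier G \<and>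
     continuous_map (prod_topology X X) X (\<lambda>(x, y). x \<otimes>\<^bsub>G\<^esub> y) \<and>
     continuous_map X X (\<lambda>x. inv\<^bsub>G\<^esub> x)"

definition neighbourhood :: "'a topology \<Rightarrow> 'a \<Rightarrow> 'a set \<Rightarrow> bool" where
  "neighbourhood X x U \<longleftrightarrow> U \<subseteq> topspace X \<and> (\<exists>W. openin X W \<and> x \<in> W \<and> W \<subseteq> U)"

text \<open>Continuous characters Gamma G (extensional on the carrier, so that each
  character is represented by exactly one HOL function).\<close>

definition characters :: "('a, 'm) monoid_scheme \<Rightarrow> 'a topology \<Rightarrow> ('a \<Rightarrow> complex) set" where
  "characters G X = {\<phi>. \<phi> \<in> hom G Tgrp \<and> continuous_map X Ttop \<phi> \<and> \<phi> \<in> extensional (carrier G)}"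

definition pointwise_dual_top :: "('a, 'm) monoid_scheme \<Rightarrow> 'a topology \<Rightarrow> ('a \<Rightarrow> complex) topology" where
  "pointwise_dual_top G X =
     subtopology (product_topology (\<lambda>_. Ttop) (carrier G)) (characters G X)"

definition equicontinuous :: "('a, 'm) monoid_scheme \<Rightarrow> 'a topology \<Rightarrow> ('a \<Rightarrow> complex) set \<Rightarrow> bool" where
  "equicontinuous G X M \<longleftrightarrow> M \<subseteq> characters G X \<and>
     (\<forall>U. neighbourhood Ttop 1 U \<longrightarrow>
        (\<exists>V. neighbourhood X \<one>\<^bsub>G\<^esub> V \<and> (\<forall>\<phi>\<in>M. \<phi> ` V \<subseteq> U)))"

definition g_barrelled :: "('a, 'm) monoid_scheme \<Rightarrow> 'a topology \<Rightarrow> bool" where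
  "g_barrelled G X \<longleftrightarrow>
     (\<forall>K. compactin (pointwise_dual_top G X) K \<longrightarrow> equicontinuous G X K)"

definition quasi_convex :: "('a, 'm) monoid_scheme \<Rightarrow> 'a topology \<Rightarrow> 'a set \<Rightarrow> bool" where
  "quasi_convex G X A \<longleftrightarrow> A \<subseteq> carrier G \<and>
     (\<forall>x \<in> carrier G - A. \<exists>\<phi> \<in> characters G X. \<phi> ` A \<subseteq> Tplus \<and> \<phi> x \<notin> Tplus)"

definition locally_quasi_convex :: "('a, 'm) monoid_scheme \<Rightarrow> 'a topology \<Rightarrow> bool" where
  "locally_quasi_convex G X \<longleftrightarrow> topological_group G X \<and>
     (\<forall>U. neighbourhood X \<one>\<^bsub>G\<^esub> U \<longrightarrow>
        (\<exists>V. neighbourhood X \<one>\<^bsub>G\<^esub> V \<and> V \<subseteq> U \<and> quasi_convex G X V))"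

definition final_lqc_topology ::
  "('a, 'm) monoid_scheme \<Rightarrow> 'a topology \<Rightarrow> 'i set \<Rightarrow> ('i \<Rightarrow> ('b, 'n) monoid_scheme)
     \<Rightarrow> ('i \<Rightarrow> 'b topology) \<Rightarrow> ('i \<Rightarrow> 'b \<Rightarrow> 'a) \<Rightarrow> bool" where
  "final_lqc_topology G X I H Y u \<longleftrightarrow>
     locally_quasi_convex G X \<and> (\<forall>i\<in>I. continuous_map (Y i) X (u i)) \<and>
     (\<forall>Z. locally_quasi_convex G Z \<and> (\<forall>i\<in>I. continuous_map (Y i) Z (u i)) \<longrightarrow>
          (\<forall>U. openin Z U \<longrightarrow> openin X U))"

end

theory Submission
  imports Defs
begin

(*
  Let K be a compact subset of the pointwise dual of (G, X); we must show that
  K is equicontinuous.  Equip G with the topology of uniform convergence on K, whose basic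
  neighbourhoods of x are {y. |phi y - phi x| <= e for all phi in K}.

  (1) This is a group topology, and it is locally quasi-convex: the polars of the finite
      unions K u 2K u ... u nK are quasi-convex (they are cut out by the continuous characters
      phi^k), and they shrink to the identity because T+ contains no nontrivial subgroup
      (quantitatively: if z^1, ..., z^n lie in T+ then |z - 1| <= pi/(2n)).
  (2) Every u_i stays continuous for it: K o u_i is compact in the pointwise dual of the
      g-barrelled group G_i, hence equicontinuous, i.e. u_i is continuous at the identity.
  (3) Since X is the finest such topology, the uniform topology is coarser than X, so the
      uniform balls around the identity are X-neighbourhoods: K is equicontinuous.
*)

lemma rho_eq_cis: "rho t = cis (2 * pi * t)"
  unfolding rho_def cis_conv_exp by (simp add: mult_ac)

lemma unit_eq_cis_Arg:
  assumes "cmod z = 1"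
  shows "z = cis (Arg z)"
proof -
  have "z \<noteq> 0" using assms by auto
  then show ?thesis using cis_Arg[of z] assms by (simp add: sgn_eq)
qed

lemma cos_nonneg_imp_le_half_pi:
  assumes "0 \<le> cos b" and "b < 3 * pi / 2"
  shows "b \<le> pi / 2"
  using cos_lt_zero_pi[of b] assms by linarith

lemma Tplus_eq: "Tplus = {z. cmod z = 1 \<and> 0 \<le> Re z}"
proof (intro equalityI subsetI)
  fix z assume "z \<in> Tplus"
  then obtain t where t: "t \<in> {-1/4..1/4}" "z = rho t" unfolding Tplus_def by auto
  have "pi * (-1/4) \<le> pi * t" "pi * t \<le> pi * (1/4)"
    using t(1) by (intro mult_left_mono; simp)+
  then have "-(pi/2) \<le> 2 * pi * t" "2 * pi * t \<le> pi/2" by linarith+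
  then have "0 \<le> cos (2 * pi * t)" by (rule cos_ge_zero)
  then show "z \<in> {z. cmod z = 1 \<and> 0 \<le> Re z}" using t by (simp add: rho_eq_cis)
next
  fix z assume z: "z \<in> {z. cmod z = 1 \<and> 0 \<le> Re z}"
  define a where "a = Arg z"
  have za: "z = cis a" using z unit_eq_cis_Arg a_def by auto
  have "-pi < a" "a \<le> pi" using Arg_bounded a_def by auto
  moreover have "0 \<le> cos \<bar>a\<bar>" using z za by (simp add: cos_abs_real)
  ultimately have "\<bar>a\<bar> \<le> pi/2" using cos_nonneg_imp_le_half_pi[of "\<bar>a\<bar>"] by linarith
  then have "a / (2 * pi) \<in> {-1/4..1/4}" by (auto simp: field_simps)
  moreover have "z = rho (a / (2 * pi))" using za by (simp add: rho_eq_cis)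
  ultimately show "z \<in> Tplus" unfolding Tplus_def by blast
qed

lemma near_one_in_Tplus:
  assumes "cmod z = 1" and "cmod (z - 1) \<le> 1"
  shows "z \<in> Tplus"
proof -
  have "(Re z - 1)^2 + (Im z)^2 \<le> 1"
  proof -
    have "(cmod (z - 1))^2 \<le> 1" using assms(2) norm_ge_zero by (simp add: power_le_one)
    then show ?thesis by (simp add: cmod_power2)
  qed
  moreover have "(Re z)^2 + (Im z)^2 = 1" using assms(1) by (metis cmod_power2 power_one)
  ultimately have "0 \<le> Re z" by (simp add: power2_eq_square algebra_simps)
  then show ?thesis using assms by (simp add: Tplus_eq)
qed

text \<open>If the angles \<open>k b\<close> (\<open>1 \<le> k \<le> n\<close>) all have nonnegative cosine, then \<open>b \<le> \<pi>/(2n)\<close>: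
  otherwise the first multiple of \<open>b\<close> beyond \<open>\<pi>/2\<close> falls into \<open>(\<pi>/2, \<pi>]\<close>.\<close>
lemma cos_multiples_nonneg_imp_small:
  assumes b: "0 \<le> b" "b \<le> pi" and n: "n > 0"
    and cos_nonneg: "\<And>k. k \<in> {1..n} \<Longrightarrow> 0 \<le> cos (real k * b)"
  shows "b \<le> pi / (2 * real n)"
proof (rule ccontr)
  assume big: "\<not> b \<le> pi / (2 * real n)"
  then have "b > 0" using n b by (smt (verit) divide_nonneg_nonneg of_nat_0_le_iff pi_gt_zero)
  have "b < 3 * pi / 2" using b pi_gt_zero by linarith
  then have b_half: "b \<le> pi / 2"
    using cos_nonneg[of 1] n by (intro cos_nonneg_imp_le_half_pi) auto
  define k :: nat where "k = nat \<lfloor>pi / (2 * b)\<rfloor> + 1"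
  have "\<lfloor>pi / (2 * b)\<rfloor> \<ge> 0" using \<open>b > 0\<close> by simp
  then have k_bounds: "real k - 1 \<le> pi / (2 * b)" "pi / (2 * b) < real k"
    unfolding k_def by (auto simp: of_nat_nat) linarith+
  have "pi / (2 * b) < real n" using big \<open>b > 0\<close> n by (auto simp: field_simps)
  then have "k \<in> {1..n}" using k_bounds unfolding k_def by auto
  have "pi / 2 < real k * b" "real k * b \<le> pi / 2 + b"
    using k_bounds \<open>b > 0\<close> by (auto simp: field_simps)
  moreover have "pi / 2 + b < 3 * pi / 2" using b_half pi_gt_zero by linarith
  ultimately have "real k * b \<le> pi / 2"
    using cos_nonneg[OF \<open>k \<in> {1..n}\<close>] by (intro cos_nonneg_imp_le_half_pi) auto
  with \<open>pi / 2 < real k * b\<close> show False by simp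
qed

text \<open>Quantitative form of the fact that \<open>T\<^sub>+\<close> contains no nontrivial subgroup: if the
  first \<open>n\<close> powers of a point of the circle lie in \<open>T\<^sub>+\<close>, the point is \<open>\<pi>/(2n)\<close>-close to 1.\<close>
lemma powers_in_Tplus_imp_near_one:
  assumes z: "cmod z = 1" and n: "n > 0" and powers: "\<And>k. k \<in> {1..n} \<Longrightarrow> z ^ k \<in> Tplus"
  shows "cmod (z - 1) \<le> pi / (2 * real n)"
proof -
  define a where "a = Arg z"
  have za: "z = cis a" using z unit_eq_cis_Arg a_def by auto
  have "-pi < a" "a \<le> pi" using Arg_bounded a_def by auto
  moreover have "0 \<le> cos (real k * \<bar>a\<bar>)" if "k \<in> {1..n}" for k
  proof -
    have "z ^ k = cis (real k * a)" using za Complex.DeMoivre by simp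
    then have "0 \<le> Re (cis (real k * a))" using powers[OF that] by (simp add: Tplus_eq)
    then show ?thesis by (cases "a \<ge> 0") auto
  qed
  ultimately have small: "\<bar>a\<bar> \<le> pi / (2 * real n)"
    using n by (intro cos_multiples_nonneg_imp_small) auto
  have "cmod (z - 1) = 2 * \<bar>sin (a / 2)\<bar>"
    using za by (simp add: cis_conv_exp dist_exp_i_1 mult.commute)
  also have "\<dots> \<le> \<bar>a\<bar>" using abs_sin_x_le_abs_x[of "a / 2"] by simp
  finally show ?thesis using small by linarith
qed

lemma Tgrp_simps [simp]: "carrier Tgrp = sphere 0 1" "mult Tgrp = (*)" "one Tgrp = 1"
  by (simp_all add: Tgrp_def)

lemma topspace_Ttop [simp]: "topspace Ttop = sphere 0 1"
  by (simp add: Ttop_def)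

lemma arc_neighbourhood:
  assumes "e > 0"
  shows "neighbourhood Ttop 1 {z \<in> sphere 0 1. cmod (z - 1) < e}"
proof -
  have "{z \<in> sphere 0 1. cmod (z - 1) < e} = ball 1 e \<inter> sphere 0 1"
    by (auto simp: dist_norm norm_minus_commute)
  then have "openin Ttop {z \<in> sphere 0 1. cmod (z - 1) < e}"
    unfolding Ttop_def openin_subtopology by auto
  then show ?thesis unfolding neighbourhood_def
    using assms by (intro conjI exI[of _ "{z \<in> sphere 0 1. cmod (z - 1) < e}"]) auto
qed

lemma neighbourhood_contains_arc:
  assumes "neighbourhood Ttop 1 U"
  obtains e where "e > 0" "{z \<in> sphere 0 1. cmod (z - 1) < e} \<subseteq> U"
proof -
  obtain W where W: "openin Ttop W" "1 \<in> W" "W \<subseteq> U"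
    using assms unfolding neighbourhood_def by blast
  then obtain T where T: "open T" "W = T \<inter> sphere 0 1"
    unfolding Ttop_def openin_subtopology by auto
  then obtain e where e: "e > 0" "ball 1 e \<subseteq> T" using W(2) open_contains_ball by blast
  have "{z \<in> sphere 0 1. cmod (z - 1) < e} \<subseteq> W"
  proof
    fix z assume z: "z \<in> {z \<in> sphere 0 1. cmod (z - 1) < e}"
    then have "z \<in> ball 1 e" by (simp add: dist_norm norm_minus_commute)
    then show "z \<in> W" using e(2) T(2) z by auto
  qed
  then show ?thesis using that e(1) W(3) by blast
qed

text \<open>For every set \<open>K\<close> of
  characters it is a locally quasi-convex group topology; compactness of \<open>K\<close> is needed only
  to keep the homomorphisms \<open>u\<^sub>i\<close> continuous.\<close>
definition uniform_open :: "('a, 'm) monoid_scheme \<Rightarrow> ('a \<Rightarrow> complex) set \<Rightarrow> 'a set \<Rightarrow> bool" where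
  "uniform_open G K U \<longleftrightarrow> U \<subseteq> carrier G \<and>
     (\<forall>x\<in>U. \<exists>e>0. \<forall>y\<in>carrier G. (\<forall>\<phi>\<in>K. cmod (\<phi> y - \<phi> x) \<le> e) \<longrightarrow> y \<in> U)"

definition uniform_top :: "('a, 'm) monoid_scheme \<Rightarrow> ('a \<Rightarrow> complex) set \<Rightarrow> 'a topology" where
  "uniform_top G K = topology (uniform_open G K)"

definition uniform_ball :: "('a, 'm) monoid_scheme \<Rightarrow> ('a \<Rightarrow> complex) set \<Rightarrow> 'a \<Rightarrow> real \<Rightarrow> 'a set" where
  "uniform_ball G K x r = {y \<in> carrier G. \<exists>s<r. \<forall>\<phi>\<in>K. cmod (\<phi> y - \<phi> x) \<le> s}"

lemma istopology_uniform_open: "istopology (uniform_open G K)"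
  unfolding istopology_def
proof (intro conjI allI impI)
  fix S T assume S: "uniform_open G K S" and T: "uniform_open G K T"
  show "uniform_open G K (S \<inter> T)" unfolding uniform_open_def
  proof (intro conjI ballI)
    show "S \<inter> T \<subseteq> carrier G" using S unfolding uniform_open_def by auto
    fix x assume x: "x \<in> S \<inter> T"
    obtain e1 where e1: "e1 > 0" "\<forall>y\<in>carrier G. (\<forall>\<phi>\<in>K. cmod (\<phi> y - \<phi> x) \<le> e1) \<longrightarrow> y \<in> S"
      using S x unfolding uniform_open_def by blast
    obtain e2 where e2: "e2 > 0" "\<forall>y\<in>carrier G. (\<forall>\<phi>\<in>K. cmod (\<phi> y - \<phi> x) \<le> e2) \<longrightarrow> y \<in> T"
      using T x unfolding uniform_open_def by blast
    have "y \<in> S \<inter> T"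
      if "y \<in> carrier G" "\<forall>\<phi>\<in>K. cmod (\<phi> y - \<phi> x) \<le> min e1 e2" for y
    proof -
      have "\<forall>\<phi>\<in>K. cmod (\<phi> y - \<phi> x) \<le> e1" "\<forall>\<phi>\<in>K. cmod (\<phi> y - \<phi> x) \<le> e2"
        using that(2) by auto
      then show ?thesis using that(1) e1(2) e2(2) by blast
    qed
    moreover have "min e1 e2 > 0" using e1(1) e2(1) by simp
    ultimately show "\<exists>e>0. \<forall>y\<in>carrier G. (\<forall>\<phi>\<in>K. cmod (\<phi> y - \<phi> x) \<le> e) \<longrightarrow> y \<in> S \<inter> T"
      by blast
  qed
next
  fix \<K> assume opens: "\<forall>S\<in>\<K>. uniform_open G K S"
  show "uniform_open G K (\<Union>\<K>)" unfolding uniform_open_def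
  proof (intro conjI ballI)
    show "\<Union>\<K> \<subseteq> carrier G" using opens unfolding uniform_open_def by auto
    fix x assume "x \<in> \<Union>\<K>"
    then obtain S where S: "S \<in> \<K>" "x \<in> S" by auto
    then obtain e where "e > 0" "\<forall>y\<in>carrier G. (\<forall>\<phi>\<in>K. cmod (\<phi> y - \<phi> x) \<le> e) \<longrightarrow> y \<in> S"
      using opens unfolding uniform_open_def by blast
    then show "\<exists>e>0. \<forall>y\<in>carrier G. (\<forall>\<phi>\<in>K. cmod (\<phi> y - \<phi> x) \<le> e) \<longrightarrow> y \<in> \<Union>\<K>"
      using S(1) by blast
  qed
qed

lemma openin_uniform_top: "openin (uniform_top G K) U \<longleftrightarrow> uniform_open G K U"
  unfolding uniform_top_def using topology_inverse'[OF istopology_uniform_open[of G K]] by simp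

lemma topspace_uniform_top [simp]: "topspace (uniform_top G K) = carrier G"
proof -
  have "uniform_open G K (carrier G)" unfolding uniform_open_def by (auto intro: exI[of _ 1])
  then have "carrier G \<subseteq> topspace (uniform_top G K)"
    by (simp add: openin_uniform_top openin_subset)
  moreover have "topspace (uniform_top G K) \<subseteq> carrier G"
    unfolding topspace_def openin_uniform_top uniform_open_def by blast
  ultimately show ?thesis by blast
qed

lemma openin_uniform_ball: "openin (uniform_top G K) (uniform_ball G K x r)"
  unfolding openin_uniform_top uniform_open_def
proof (intro conjI ballI)
  show "uniform_ball G K x r \<subseteq> carrier G" unfolding uniform_ball_def by auto
  fix y assume "y \<in> uniform_ball G K x r"
  then obtain s where s: "s < r" "\<forall>\<phi>\<in>K. cmod (\<phi> y - \<phi> x) \<le> s"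
    unfolding uniform_ball_def by auto
  have "z \<in> uniform_ball G K x r"
    if z: "z \<in> carrier G" "\<forall>\<phi>\<in>K. cmod (\<phi> z - \<phi> y) \<le> (r - s) / 2" for z
  proof -
    have "cmod (\<phi> z - \<phi> x) \<le> s + (r - s) / 2" if "\<phi> \<in> K" for \<phi>
    proof -
      have "cmod (\<phi> z - \<phi> x) \<le> cmod (\<phi> z - \<phi> y) + cmod (\<phi> y - \<phi> x)"
        using norm_triangle_ineq[of "\<phi> z - \<phi> y" "\<phi> y - \<phi> x"] by simp
      moreover have "cmod (\<phi> z - \<phi> y) \<le> (r - s) / 2" "cmod (\<phi> y - \<phi> x) \<le> s"
        using z(2) s(2) that by auto
      ultimately show ?thesis by linarith
    qed
    moreover have "s + (r - s) / 2 < r" using s(1) by (simp add: field_simps)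
    ultimately show ?thesis unfolding uniform_ball_def using z by blast
  qed
  moreover have "(r - s) / 2 > 0" using s(1) by simp
  ultimately show "\<exists>e>0. \<forall>z\<in>carrier G. (\<forall>\<phi>\<in>K. cmod (\<phi> z - \<phi> y) \<le> e) \<longrightarrow> z \<in> uniform_ball G K x r"
    by blast
qed

lemma uniform_ball_centre: "x \<in> carrier G \<Longrightarrow> 0 < r \<Longrightarrow> x \<in> uniform_ball G K x r"
  unfolding uniform_ball_def by auto

lemma uniform_ballD:
  "y \<in> uniform_ball G K x r \<Longrightarrow> y \<in> carrier G"
  "y \<in> uniform_ball G K x r \<Longrightarrow> \<phi> \<in> K \<Longrightarrow> cmod (\<phi> y - \<phi> x) < r"
  unfolding uniform_ball_def by force+

lemma continuous_map_into_uniform_top: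
  assumes maps: "f \<in> topspace Z \<rightarrow> carrier G"
    and near: "\<And>a e. a \<in> topspace Z \<Longrightarrow> e > 0 \<Longrightarrow>
       \<exists>W. openin Z W \<and> a \<in> W \<and> (\<forall>y\<in>W. \<forall>\<phi>\<in>K. cmod (\<phi> (f y) - \<phi> (f a)) \<le> e)"
  shows "continuous_map Z (uniform_top G K) f"
  unfolding continuous_map_def
proof (intro conjI allI impI)
  show "f \<in> topspace Z \<rightarrow> topspace (uniform_top G K)" using maps by simp
  fix U assume "openin (uniform_top G K) U"
  then have U: "uniform_open G K U" by (simp add: openin_uniform_top)
  show "openin Z {a \<in> topspace Z. f a \<in> U}"
  proof (subst openin_subopen, intro ballI)
    fix a assume a: "a \<in> {a \<in> topspace Z. f a \<in> U}"
    then obtain e where e: "e > 0" "\<forall>y\<in>carrier G. (\<forall>\<phi>\<in>K. cmod (\<phi> y - \<phi> (f a)) \<le> e) \<longrightarrow> y \<in> U"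
      using U unfolding uniform_open_def by blast
    obtain W where W: "openin Z W" "a \<in> W" "\<forall>y\<in>W. \<forall>\<phi>\<in>K. cmod (\<phi> (f y) - \<phi> (f a)) \<le> e"
      using near a e(1) by blast
    have "W \<subseteq> {a \<in> topspace Z. f a \<in> U}"
    proof
      fix y assume "y \<in> W"
      then have "y \<in> topspace Z" using openin_subset[OF W(1)] by blast
      moreover have "f y \<in> U" using e(2) W(3) \<open>y \<in> W\<close> maps \<open>y \<in> topspace Z\<close> by blast
      ultimately show "y \<in> {a \<in> topspace Z. f a \<in> U}" by simp
    qed
    then show "\<exists>T. openin Z T \<and> a \<in> T \<and> T \<subseteq> {a \<in> topspace Z. f a \<in> U}" using W by blast
  qed
qed

lemma restrict_compose_character:
  assumes \<phi>: "\<phi> \<in> characters G X" and v: "v \<in> hom H G" "continuous_map Y X v"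
    and tY: "topspace Y = carrier H" and H: "monoid H"
  shows "restrict (\<phi> \<circ> v) (carrier H) \<in> characters H Y"
  unfolding characters_def
proof (intro CollectI conjI)
  have "\<phi> \<circ> v \<in> hom H Tgrp" using hom_compose[OF v(1)] \<phi> unfolding characters_def by auto
  then show "restrict (\<phi> \<circ> v) (carrier H) \<in> hom H Tgrp"
    unfolding hom_def using monoid.m_closed[OF H] by (auto simp: Pi_iff)
  show "restrict (\<phi> \<circ> v) (carrier H) \<in> extensional (carrier H)" by simp
  have "continuous_map Y Ttop (\<phi> \<circ> v)"
    using continuous_map_compose[OF v(2)] \<phi> unfolding characters_def by auto
  then show "continuous_map Y Ttop (restrict (\<phi> \<circ> v) (carrier H))"
    by (rule continuous_map_eq) (simp add: tY)
qed

lemma dual_map_continuous: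
  assumes v: "v \<in> hom H G" "continuous_map Y X v"
    and tY: "topspace Y = carrier H" and H: "monoid H"
  shows "continuous_map (pointwise_dual_top G X) (pointwise_dual_top H Y)
           (\<lambda>\<phi>. restrict (\<phi> \<circ> v) (carrier H))"
  unfolding pointwise_dual_top_def continuous_map_in_subtopology
proof (intro conjI)
  let ?S = "subtopology (product_topology (\<lambda>_. Ttop) (carrier G)) (characters G X)"
  show "continuous_map ?S (product_topology (\<lambda>_. Ttop) (carrier H)) (\<lambda>\<phi>. restrict (\<phi> \<circ> v) (carrier H))"
    unfolding continuous_map_componentwise
  proof (intro conjI ballI)
    show "(\<lambda>\<phi>. restrict (\<phi> \<circ> v) (carrier H)) ` topspace ?S \<subseteq> extensional (carrier H)" by auto
    fix k assume k: "k \<in> carrier H"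
    then have "v k \<in> carrier G" using v(1) unfolding hom_def by auto
    then have "continuous_map ?S Ttop (\<lambda>\<phi>. \<phi> (v k))"
      by (intro continuous_map_from_subtopology continuous_map_product_projection)
    then show "continuous_map ?S Ttop (\<lambda>\<phi>. restrict (\<phi> \<circ> v) (carrier H) k)"
      using k by simp
  qed
  show "(\<lambda>\<phi>. restrict (\<phi> \<circ> v) (carrier H)) \<in> topspace ?S \<rightarrow> characters H Y"
    using restrict_compose_character[OF _ v tY H] by auto
qed

lemma equicontinuous_near_one:
  assumes "equicontinuous H Y M" and "e > 0"
  obtains W where "openin Y W" "\<one>\<^bsub>H\<^esub> \<in> W" "\<And>\<psi> w. \<psi> \<in> M \<Longrightarrow> w \<in> W \<Longrightarrow> cmod (\<psi> w - 1) < e"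
proof -
  obtain V where V: "neighbourhood Y \<one>\<^bsub>H\<^esub> V"
    and small: "\<forall>\<psi>\<in>M. \<psi> ` V \<subseteq> {z \<in> sphere 0 1. cmod (z - 1) < e}"
    using assms arc_neighbourhood unfolding equicontinuous_def by blast
  obtain W where W: "openin Y W" "\<one>\<^bsub>H\<^esub> \<in> W" "W \<subseteq> V"
    using V unfolding neighbourhood_def by auto
  moreover have "cmod (\<psi> w - 1) < e" if "\<psi> \<in> M" "w \<in> W" for \<psi> w
    using small that W(3) by blast
  ultimately show ?thesis using that by blast
qed

lemma openin_translate:
  assumes "topological_group H Y" and a: "a \<in> carrier H" and "openin Y W"
  shows "openin Y {y \<in> topspace Y. inv\<^bsub>H\<^esub> a \<otimes>\<^bsub>H\<^esub> y \<in> W}"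
proof -
  have tY: "topspace Y = carrier H" and H: "comm_group H"
    and mult: "continuous_map (prod_topology Y Y) Y (\<lambda>(x, y). x \<otimes>\<^bsub>H\<^esub> y)"
    using assms(1) unfolding topological_group_def by auto
  interpret H: comm_group H by (rule H)
  have "inv\<^bsub>H\<^esub> a \<in> topspace Y" using a tY by simp
  then have "continuous_map Y (prod_topology Y Y) (\<lambda>y. (inv\<^bsub>H\<^esub> a, y))"
    by (intro continuous_map_pairedI continuous_map_id) auto
  from continuous_map_compose[OF this mult]
  have "continuous_map Y Y (\<lambda>y. inv\<^bsub>H\<^esub> a \<otimes>\<^bsub>H\<^esub> y)" by (simp add: o_def)
  then show ?thesis using assms(3) by (simp add: continuous_map_def)
qed

text \<open>The polar of \<open>K \<union> 2K \<union> \<dots> \<union> nK\<close>: all \<open>x\<close> with \<open>\<phi>(x)\<^sup>k \<in> T\<^sub>+\<close> for \<open>\<phi> \<in> K\<close>, \<open>1 \<le> k \<le> n\<close>.  These sets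
  form a base of quasi-convex neighbourhoods of the identity in the uniform topology.\<close>
definition multiples_polar :: "('a, 'm) monoid_scheme \<Rightarrow> ('a \<Rightarrow> complex) set \<Rightarrow> nat \<Rightarrow> 'a set" where
  "multiples_polar G K n = {x \<in> carrier G. \<forall>\<phi>\<in>K. \<forall>k\<in>{1..n}. \<phi> x ^ k \<in> Tplus}"

locale character_family = comm_group G for G :: "('a, 'm) monoid_scheme" (structure) +
  fixes K :: "('a \<Rightarrow> complex) set"
  assumes K_hom: "K \<subseteq> hom G Tgrp"
begin

lemma char_norm: "\<phi> \<in> K \<Longrightarrow> x \<in> carrier G \<Longrightarrow> cmod (\<phi> x) = 1"
  using hom_in_carrier[of \<phi> G Tgrp x] K_hom by auto

lemma char_mult:
  assumes "\<phi> \<in> K" "x \<in> carrier G" "y \<in> carrier G"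
  shows "\<phi> (x \<otimes> y) = \<phi> x * \<phi> y"
  using hom_mult[of \<phi> G Tgrp x y] K_hom assms by auto

lemma char_one: "\<phi> \<in> K \<Longrightarrow> \<phi> \<one> = 1"
  using char_mult[of \<phi> \<one> \<one>] char_norm[of \<phi> \<one>] by auto

lemma char_inv:
  assumes "\<phi> \<in> K" "x \<in> carrier G"
  shows "\<phi> (inv x) = 1 / \<phi> x"
proof -
  have "\<phi> x * \<phi> (inv x) = 1" using char_mult[of \<phi> x "inv x"] char_one[OF assms(1)] assms by simp
  moreover have "\<phi> x \<noteq> 0" using char_norm assms by fastforce
  ultimately show ?thesis by (simp add: field_simps)
qed

lemma char_dist_mult:
  assumes "\<phi> \<in> K" "x \<in> carrier G" "y \<in> carrier G" "a \<in> carrier G" "b \<in> carrier G"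
  shows "cmod (\<phi> (x \<otimes> y) - \<phi> (a \<otimes> b)) \<le> cmod (\<phi> x - \<phi> a) + cmod (\<phi> y - \<phi> b)"
proof -
  have "\<phi> (x \<otimes> y) - \<phi> (a \<otimes> b) = (\<phi> x - \<phi> a) * \<phi> y + \<phi> a * (\<phi> y - \<phi> b)"
    using char_mult assms by (simp add: algebra_simps)
  also have "cmod \<dots> \<le> cmod ((\<phi> x - \<phi> a) * \<phi> y) + cmod (\<phi> a * (\<phi> y - \<phi> b))"
    by (rule norm_triangle_ineq)
  also have "\<dots> = cmod (\<phi> x - \<phi> a) + cmod (\<phi> y - \<phi> b)"
    using char_norm assms by (simp add: norm_mult)
  finally show ?thesis .
qed

lemma char_dist_inv:
  assumes "\<phi> \<in> K" "x \<in> carrier G" "y \<in> carrier G"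
  shows "cmod (\<phi> (inv y) - \<phi> (inv x)) = cmod (\<phi> y - \<phi> x)"
proof -
  have "\<phi> x \<noteq> 0" "\<phi> y \<noteq> 0" using char_norm assms by fastforce+
  moreover have "\<phi> (inv x) = 1 / \<phi> x" "\<phi> (inv y) = 1 / \<phi> y" using char_inv assms by auto
  ultimately have "\<phi> (inv y) - \<phi> (inv x) = (\<phi> x - \<phi> y) / (\<phi> x * \<phi> y)"
    by (simp add: field_simps)
  then show ?thesis using char_norm assms by (simp add: norm_divide norm_mult norm_minus_commute)
qed

lemma uniform_top_group: "topological_group G (uniform_top G K)"
  unfolding topological_group_def
proof (intro conjI)
  show "comm_group G" by (rule comm_group_axioms)
  show "topspace (uniform_top G K) = carrier G" by simp
  let ?P = "prod_topology (uniform_top G K) (uniform_top G K)"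
  show "continuous_map ?P (uniform_top G K) (\<lambda>(x, y). x \<otimes> y)"
  proof (rule continuous_map_into_uniform_top)
    show "(\<lambda>(x, y). x \<otimes> y) \<in> topspace ?P \<rightarrow> carrier G" by auto
    fix p and e :: real assume "p \<in> topspace ?P" and e: "e > 0"
    then obtain a b where ab: "p = (a, b)" "a \<in> carrier G" "b \<in> carrier G" by auto
    let ?W = "uniform_ball G K a (e / 2) \<times> uniform_ball G K b (e / 2)"
    have "openin ?P ?W" by (simp add: openin_prod_Times_iff openin_uniform_ball)
    moreover have "p \<in> ?W" using ab e by (simp add: uniform_ball_centre)
    moreover have "cmod (\<phi> (x \<otimes> y) - \<phi> (a \<otimes> b)) \<le> e" if "(x, y) \<in> ?W" "\<phi> \<in> K" for x y \<phi>
    proof -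
      have x: "x \<in> uniform_ball G K a (e / 2)" and y: "y \<in> uniform_ball G K b (e / 2)"
        using that(1) by auto
      have "cmod (\<phi> x - \<phi> a) < e / 2" "cmod (\<phi> y - \<phi> b) < e / 2"
        using uniform_ballD(2)[OF x that(2)] uniform_ballD(2)[OF y that(2)] by auto
      moreover have "x \<in> carrier G" "y \<in> carrier G"
        using uniform_ballD(1)[OF x] uniform_ballD(1)[OF y] by auto
      ultimately show ?thesis using char_dist_mult[of \<phi> x y a b] that(2) ab by linarith
    qed
    ultimately show "\<exists>W. openin ?P W \<and> p \<in> W \<and>
        (\<forall>q\<in>W. \<forall>\<phi>\<in>K. cmod (\<phi> ((\<lambda>(x, y). x \<otimes> y) q) - \<phi> ((\<lambda>(x, y). x \<otimes> y) p)) \<le> e)"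
      using ab by (intro exI[of _ ?W]) auto
  qed
  show "continuous_map (uniform_top G K) (uniform_top G K) (\<lambda>x. inv x)"
  proof (rule continuous_map_into_uniform_top)
    show "(\<lambda>x. inv x) \<in> topspace (uniform_top G K) \<rightarrow> carrier G" by auto
    fix a and e :: real assume a: "a \<in> topspace (uniform_top G K)" and e: "e > 0"
    have "cmod (\<phi> (inv y) - \<phi> (inv a)) \<le> e" if "y \<in> uniform_ball G K a e" "\<phi> \<in> K" for y \<phi>
      using char_dist_inv[of \<phi> a y] uniform_ballD[OF that(1)] that(2) a by fastforce
    then show "\<exists>W. openin (uniform_top G K) W \<and> a \<in> W \<and>
        (\<forall>y\<in>W. \<forall>\<phi>\<in>K. cmod (\<phi> (inv y) - \<phi> (inv a)) \<le> e)"
      using a e by (intro exI[of _ "uniform_ball G K a e"])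
        (auto intro: openin_uniform_ball uniform_ball_centre)
  qed
qed

lemma continuous_map_char:
  assumes "\<phi> \<in> K"
  shows "continuous_map (uniform_top G K) Ttop \<phi>"
  unfolding Ttop_def continuous_map_in_subtopology
proof
  show "\<phi> \<in> topspace (uniform_top G K) \<rightarrow> sphere 0 1" using char_norm[OF assms] by auto
  show "continuous_map (uniform_top G K) euclidean \<phi>"
    unfolding continuous_map_def
  proof (intro conjI allI impI)
    fix T :: "complex set" assume "openin euclidean T"
    show "openin (uniform_top G K) {x \<in> topspace (uniform_top G K). \<phi> x \<in> T}"
      unfolding openin_uniform_top uniform_open_def
    proof (intro conjI ballI)
      fix x assume x: "x \<in> {x \<in> topspace (uniform_top G K). \<phi> x \<in> T}"
      have "open T" "\<phi> x \<in> T" using \<open>openin euclidean T\<close> x by auto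
      then obtain e where e: "e > 0" "ball (\<phi> x) e \<subseteq> T"
        using open_contains_ball by blast
      have "y \<in> {x \<in> topspace (uniform_top G K). \<phi> x \<in> T}"
        if "y \<in> carrier G" "\<forall>\<psi>\<in>K. cmod (\<psi> y - \<psi> x) \<le> e / 2" for y
      proof -
        have "cmod (\<phi> y - \<phi> x) < e" using that(2) assms e(1) by fastforce
        then have "\<phi> y \<in> ball (\<phi> x) e" by (simp add: dist_norm norm_minus_commute)
        then show ?thesis using e(2) that(1) by auto
      qed
      then show "\<exists>d>0. \<forall>y\<in>carrier G. (\<forall>\<psi>\<in>K. cmod (\<psi> y - \<psi> x) \<le> d) \<longrightarrow>
          y \<in> {x \<in> topspace (uniform_top G K). \<phi> x \<in> T}"
        using e(1) by (intro exI[of _ "e / 2"]) auto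
    qed auto
  qed auto
qed

lemma continuous_map_power_Ttop: "continuous_map Ttop Ttop (\<lambda>z. z ^ k)"
  unfolding Ttop_def continuous_map_in_subtopology continuous_map_iff_continuous
  by (simp add: continuous_on_power norm_power Pi_iff)

text \<open>The powers \<open>\<phi>\<^sup>k\<close> of members of \<open>K\<close> are continuous characters of the uniform topology;
  they separate points from the neighbourhoods constructed below.\<close>
lemma power_character:
  assumes "\<phi> \<in> K"
  shows "restrict (\<lambda>x. \<phi> x ^ k) (carrier G) \<in> characters G (uniform_top G K)"
  unfolding characters_def
proof (intro CollectI conjI)
  show "restrict (\<lambda>x. \<phi> x ^ k) (carrier G) \<in> hom G Tgrp"
    unfolding hom_def using char_norm[OF assms] char_mult[OF assms]
    by (auto simp: norm_power power_mult_distrib)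
  show "restrict (\<lambda>x. \<phi> x ^ k) (carrier G) \<in> extensional (carrier G)" by simp
  have "continuous_map (uniform_top G K) Ttop ((\<lambda>z. z ^ k) \<circ> \<phi>)"
    by (rule continuous_map_compose[OF continuous_map_char[OF assms] continuous_map_power_Ttop])
  then show "continuous_map (uniform_top G K) Ttop (restrict (\<lambda>x. \<phi> x ^ k) (carrier G))"
    by (rule continuous_map_eq) simp
qed

text \<open>Quasi-convexity: a point outside the polar is separated from it by some \<open>\<phi>\<^sup>k\<close>.\<close>
lemma multiples_polar_quasi_convex: "quasi_convex G (uniform_top G K) (multiples_polar G K n)"
  unfolding quasi_convex_def
proof (intro conjI ballI)
  show "multiples_polar G K n \<subseteq> carrier G" unfolding multiples_polar_def by auto
  fix x assume x: "x \<in> carrier G - multiples_polar G K n"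
  then obtain \<phi> k where \<phi>: "\<phi> \<in> K" and k: "k \<in> {1..n}" and "\<phi> x ^ k \<notin> Tplus"
    unfolding multiples_polar_def by auto
  moreover have "restrict (\<lambda>y. \<phi> y ^ k) (carrier G) ` multiples_polar G K n \<subseteq> Tplus"
    using \<phi> k unfolding multiples_polar_def by auto
  ultimately show "\<exists>\<psi>\<in>characters G (uniform_top G K). \<psi> ` multiples_polar G K n \<subseteq> Tplus \<and> \<psi> x \<notin> Tplus"
    using x power_character[OF \<phi>] by (intro bexI[of _ "restrict (\<lambda>y. \<phi> y ^ k) (carrier G)"]) auto
qed

lemma multiples_polar_near_one:
  assumes "x \<in> multiples_polar G K n" and "n > 0" and "\<phi> \<in> K"
  shows "cmod (\<phi> x - 1) \<le> pi / (2 * real n)"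
  using assms char_norm[of \<phi> x] unfolding multiples_polar_def
  by (intro powers_in_Tplus_imp_near_one) auto

text \<open>Each polar is a uniform neighbourhood of the identity, since \<open>|z\<^sup>k - 1| \<le> k |z - 1|\<close>.\<close>
lemma uniform_ball_subset_multiples_polar:
  assumes "n > 0"
  shows "uniform_ball G K \<one> (1 / real n) \<subseteq> multiples_polar G K n"
proof
  fix y assume y: "y \<in> uniform_ball G K \<one> (1 / real n)"
  then have y_carrier: "y \<in> carrier G" by (rule uniform_ballD(1))
  have "\<phi> y ^ k \<in> Tplus" if \<phi>: "\<phi> \<in> K" and k: "k \<in> {1..n}" for \<phi> k
  proof -
    have unit: "cmod (\<phi> y) = 1" using char_norm[OF \<phi> y_carrier] .
    have "cmod (\<phi> y ^ k - 1 ^ k) \<le> real k * cmod (\<phi> y - 1)"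
      using unit by (intro norm_power_diff) auto
    also have "\<dots> \<le> real n * (1 / real n)"
      using k uniform_ballD(2)[OF y \<phi>] char_one[OF \<phi>] by (intro mult_mono) auto
    also have "\<dots> = 1" using assms by simp
    finally show ?thesis using unit by (intro near_one_in_Tplus) (auto simp: norm_power)
  qed
  then show "y \<in> multiples_polar G K n" unfolding multiples_polar_def using y_carrier by auto
qed

text \<open>The uniform topology of \<open>K\<close> is locally quasi-convex: every uniform neighbourhood of
  the identity contains some \<open>multiples_polar G K n\<close>, which is itself a neighbourhood.\<close>
lemma uniform_top_locally_quasi_convex: "locally_quasi_convex G (uniform_top G K)"
  unfolding locally_quasi_convex_def
proof (intro conjI allI impI uniform_top_group)
  fix U assume "neighbourhood (uniform_top G K) \<one> U"
  then obtain W where W: "openin (uniform_top G K) W" "\<one> \<in> W" "W \<subseteq> U"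
    unfolding neighbourhood_def by auto
  then obtain e where e: "e > 0" "\<forall>y\<in>carrier G. (\<forall>\<phi>\<in>K. cmod (\<phi> y - \<phi> \<one>) \<le> e) \<longrightarrow> y \<in> W"
    unfolding openin_uniform_top uniform_open_def by blast
  obtain n :: nat where n: "pi / (2 * e) < real n" using reals_Archimedean2 by blast
  moreover have "0 < pi / (2 * e)" using e(1) by simp
  ultimately have "n > 0" by simp
  have "pi / (2 * real n) \<le> e" using n e(1) \<open>n > 0\<close> by (simp add: field_simps)
  have "multiples_polar G K n \<subseteq> U"
  proof
    fix x assume x: "x \<in> multiples_polar G K n"
    have "cmod (\<phi> x - \<phi> \<one>) \<le> e" if "\<phi> \<in> K" for \<phi>
      using multiples_polar_near_one[OF x \<open>n > 0\<close> that] char_one[OF that]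
        \<open>pi / (2 * real n) \<le> e\<close> by simp
    moreover have "x \<in> carrier G" using x unfolding multiples_polar_def by simp
    ultimately show "x \<in> U" using e(2) W(3) by blast
  qed
  moreover have "neighbourhood (uniform_top G K) \<one> (multiples_polar G K n)"
    unfolding neighbourhood_def
  proof (intro conjI exI)
    show "multiples_polar G K n \<subseteq> topspace (uniform_top G K)"
      unfolding multiples_polar_def by auto
    show "openin (uniform_top G K) (uniform_ball G K \<one> (1 / real n))"
      by (rule openin_uniform_ball)
    show "\<one> \<in> uniform_ball G K \<one> (1 / real n)"
      using \<open>n > 0\<close> by (intro uniform_ball_centre) auto
    show "uniform_ball G K \<one> (1 / real n) \<subseteq> multiples_polar G K n"
      using \<open>n > 0\<close> by (rule uniform_ball_subset_multiples_polar)
  qed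
  ultimately show "\<exists>V. neighbourhood (uniform_top G K) \<one> V \<and> V \<subseteq> U \<and>
      quasi_convex G (uniform_top G K) V"
    using multiples_polar_quasi_convex by blast
qed

text \<open>Indeed
  \<open>K \<circ> v\<close> is compact in \<open>\<Gamma>\<^sub>s H\<close>, hence equicontinuous, which is continuity at the identity;
  translation gives continuity everywhere.\<close>
lemma hom_from_g_barrelled_continuous:
  fixes H :: "('b, 'n) monoid_scheme" and Y :: "'b topology"
  assumes tg: "topological_group H Y" and gb: "g_barrelled H Y"
    and v: "v \<in> hom H G" "continuous_map Y X v"
    and K: "compactin (pointwise_dual_top G X) K"
  shows "continuous_map Y (uniform_top G K) v"
proof (rule continuous_map_into_uniform_top)
  have tY: "topspace Y = carrier H" and H: "comm_group H"
    using tg unfolding topological_group_def by auto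
  interpret H: comm_group H by (rule H)
  show "v \<in> topspace Y \<rightarrow> carrier G" using v(1) tY unfolding hom_def by auto
  fix a and e :: real assume a: "a \<in> topspace Y" and e: "e > 0"
  define M where "M = (\<lambda>\<phi>. restrict (\<phi> \<circ> v) (carrier H)) ` K"
  have "compactin (pointwise_dual_top H Y) M"
    unfolding M_def by (rule image_compactin[OF K dual_map_continuous[OF v tY H.monoid_axioms]])
  then have "equicontinuous H Y M" using gb unfolding g_barrelled_def by auto
  then obtain W where W: "openin Y W" "\<one>\<^bsub>H\<^esub> \<in> W"
    and small: "\<And>\<psi> w. \<psi> \<in> M \<Longrightarrow> w \<in> W \<Longrightarrow> cmod (\<psi> w - 1) < e"
    using equicontinuous_near_one[OF _ e] by blast
  let ?T = "{y \<in> topspace Y. inv\<^bsub>H\<^esub> a \<otimes>\<^bsub>H\<^esub> y \<in> W}"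
  have "openin Y ?T" using openin_translate[OF tg _ W(1)] a tY by simp
  moreover have "a \<in> ?T" using a tY W(2) by simp
  moreover have "cmod (\<phi> (v y) - \<phi> (v a)) \<le> e" if y: "y \<in> ?T" and \<phi>: "\<phi> \<in> K" for y \<phi>
  proof -
    define w where "w = inv\<^bsub>H\<^esub> a \<otimes>\<^bsub>H\<^esub> y"
    have carrier: "a \<in> carrier H" "y \<in> carrier H" "w \<in> carrier H"
      using a y tY unfolding w_def by auto
    have "y = a \<otimes>\<^bsub>H\<^esub> w" using carrier unfolding w_def by (simp add: H.m_assoc[symmetric])
    then have "v y = v a \<otimes> v w" using v(1) carrier by (simp add: hom_mult)
    moreover have "v a \<in> carrier G" "v w \<in> carrier G" using v(1) carrier unfolding hom_def by auto
    ultimately have "\<phi> (v y) - \<phi> (v a) = \<phi> (v a) * (\<phi> (v w) - 1)"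
      using char_mult[OF \<phi>] by (simp add: algebra_simps)
    moreover have "cmod (\<phi> (v w) - 1) < e"
      using small[of "restrict (\<phi> \<circ> v) (carrier H)" w] y \<phi> carrier unfolding M_def w_def by auto
    ultimately show ?thesis using char_norm[OF \<phi> \<open>v a \<in> carrier G\<close>] by (simp add: norm_mult)
  qed
  ultimately show "\<exists>W. openin Y W \<and> a \<in> W \<and> (\<forall>y\<in>W. \<forall>\<phi>\<in>K. cmod (\<phi> (v y) - \<phi> (v a)) \<le> e)"
    by blast
qed

lemma equicontinuous_if_uniform_top_coarser:
  assumes K: "K \<subseteq> characters G X" and tX: "topspace X = carrier G"
    and coarser: "\<And>U. openin (uniform_top G K) U \<Longrightarrow> openin X U"
  shows "equicontinuous G X K"
  unfolding equicontinuous_def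
proof (intro conjI allI impI K)
  fix U assume "neighbourhood Ttop 1 U"
  then obtain e where e: "e > 0" "{z \<in> sphere 0 1. cmod (z - 1) < e} \<subseteq> U"
    by (rule neighbourhood_contains_arc)
  let ?V = "uniform_ball G K \<one> e"
  have "openin X ?V" by (rule coarser[OF openin_uniform_ball])
  moreover have "\<one> \<in> ?V" by (rule uniform_ball_centre[OF one_closed e(1)])
  moreover have "?V \<subseteq> topspace X" by (auto simp: tX uniform_ball_def)
  ultimately have "neighbourhood X \<one> ?V" unfolding neighbourhood_def by blast
  moreover have "\<phi> ` ?V \<subseteq> U" if \<phi>: "\<phi> \<in> K" for \<phi>
  proof
    fix z assume "z \<in> \<phi> ` ?V"
    then obtain y where y: "y \<in> ?V" "z = \<phi> y" by blast
    have "cmod (\<phi> y - 1) < e" using uniform_ballD(2)[OF y(1) \<phi>] char_one[OF \<phi>] by simp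
    moreover have "cmod (\<phi> y) = 1" using char_norm[OF \<phi> uniform_ballD(1)[OF y(1)]] .
    ultimately have "\<phi> y \<in> {z \<in> sphere 0 1. cmod (z - 1) < e}" by simp
    then show "z \<in> U" using e(2) y(2) by blast
  qed
  ultimately show "\<exists>V. neighbourhood X \<one> V \<and> (\<forall>\<phi>\<in>K. \<phi> ` V \<subseteq> U)" by blast
qed

end

theorem corollary2p13:
  fixes G :: "('a, 'm) monoid_scheme" and X :: "'a topology"
    and I :: "'i set" and H :: "'i \<Rightarrow> ('b, 'n) monoid_scheme"
    and Y :: "'i \<Rightarrow> 'b topology" and u :: "'i \<Rightarrow> 'b \<Rightarrow> 'a"
  assumes "comm_group G"
    and "\<And>i. i \<in> I \<Longrightarrow> topological_group (H i) (Y i)"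
    and "\<And>i. i \<in> I \<Longrightarrow> g_barrelled (H i) (Y i)"
    and "\<And>i. i \<in> I \<Longrightarrow> u i \<in> hom (H i) G"
    and "final_lqc_topology G X I H Y u"
  shows "g_barrelled G X"
  unfolding g_barrelled_def
proof (intro allI impI)
  fix K assume K: "compactin (pointwise_dual_top G X) K"
  then have K_chars: "K \<subseteq> characters G X"
    using compactin_subset_topspace unfolding pointwise_dual_top_def by fastforce
  then have "K \<subseteq> hom G Tgrp" unfolding characters_def by blast
  then interpret character_family G K
    by (intro character_family.intro character_family_axioms.intro assms(1))
  have "locally_quasi_convex G X" and u_cont: "\<forall>i\<in>I. continuous_map (Y i) X (u i)"
    and finest: "\<And>Z. locally_quasi_convex G Z \<and> (\<forall>i\<in>I. continuous_map (Y i) Z (u i)) \<Longrightarrow>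
       (\<forall>U. openin Z U \<longrightarrow> openin X U)"
    using assms(5) unfolding final_lqc_topology_def by blast+
  then have "topspace X = carrier G"
    unfolding locally_quasi_convex_def topological_group_def by blast
  txt \<open>The uniform topology of \<open>K\<close> is a competitor in the definition of \<open>X\<close>, hence coarser.\<close>
  have "\<forall>i\<in>I. continuous_map (Y i) (uniform_top G K) (u i)"
    using hom_from_g_barrelled_continuous[OF assms(2,3,4) _ K] u_cont by blast
  then have "openin (uniform_top G K) U \<Longrightarrow> openin X U" for U
    using finest[of "uniform_top G K"] uniform_top_locally_quasi_convex by blast
  then show "equicontinuous G X K"
    using equicontinuous_if_uniform_top_coarser[OF K_chars \<open>topspace X = carrier G\<close>] by blast
qed

end
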